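(* Let $a,b\colon\mathbb N\to\mathbb Z\setminus\{0\}$ be injective sequences and let $c\colon\mathbb N\to[0,1/4]$ be any sequence. Then there exist a probability space $(X,\mathcal X,\mu)$, invertible measure preserving transformations $T,S\colon X\to X$, and $A\in\mathcal X$ such that $c(n)=\mu(T^{-a(n)}A\cap S^{-b(n)}A)$ for every $n\in\mathbb N$. *)

theory Defs
  imports "HOL-Probability.Probability"
begin

definition invertible_mpt :: "'a measure \<Rightarrow> ('a \<Rightarrow> 'a) \<Rightarrow> bool" where
  "invertible_mpt M T \<longleftrightarrow>
     bij_betw T (space M) (space M) \<and>
     T \<in> measurable M M \<and> distr M M T = M \<and>
     the_inv_into (space M) T \<in> measurable M M \<and>
     distr M M (the_inv_into (space M) T) = M"

definition ziter :: "'a measure \<Rightarrow> ('a \<Rightarrow> 'a) \<Rightarrow> int \<Rightarrow> 'a \<Rightarrow> 'a" where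
  "ziter M T k = (if 0 \<le> k then T ^^ nat k else (the_inv_into (space M) T) ^^ nat (- k))"

text \<open>The set T^{-k} A = {x. T^k x \<in> A}.\<close>
definition zpreimage :: "'a measure \<Rightarrow> ('a \<Rightarrow> 'a) \<Rightarrow> int \<Rightarrow> 'a set \<Rightarrow> 'a set" where
  "zpreimage M T k A = {x \<in> space M. ziter M T k x \<in> A}"

end

theory Submission
  imports Defs
begin

(* The space is the product of countably many copies of the uniform measure on [0, 1], with the
   coordinates indexed by two copies of the integers.  T is the shift along both copies, and
   S = R \<circ> T \<circ> R for an involution R that swaps coordinate (False, a n) with (True, b n)
   (and (False, 0) with (True, 0)) while reflecting these coordinates by a measure preserving
   map of [0, 1] chosen depending on c n.  For A = {x. x (False, 0) \<in> [0, 1/2)} both events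
   T^a(n) x \<in> A and S^b(n) x \<in> A then depend only on the coordinate (False, a n), and their
   intersection has measure exactly c n. *)

definition preserves_measure :: "'a measure \<Rightarrow> ('a \<Rightarrow> 'a) \<Rightarrow> bool" where
  "preserves_measure M f \<longleftrightarrow> f \<in> measurable M M \<and> distr M M f = M"

lemma preserves_measure_comp:
  assumes "preserves_measure M f" "preserves_measure M g"
  shows "preserves_measure M (f \<circ> g)"
proof -
  have "distr M M (f \<circ> g) = distr (distr M M g) M f"
    using assms by (subst distr_distr) (auto simp: preserves_measure_def)
  with assms show ?thesis
    by (auto simp: preserves_measure_def intro: measurable_comp)
qed

lemma the_inv_into_UNIV_eq:
  assumes "U \<circ> T = id" "T \<circ> U = id"
  shows "the_inv_into UNIV T = U"
proof
  fix y
  have "inj T" using assms(1) by (metis inj_on_id inj_on_imageI2)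
  then show "the_inv_into UNIV T y = U y"
    using assms(2) by (intro the_inv_into_f_eq) (auto simp: fun_eq_iff)
qed

lemma invertible_mpt_UNIV:
  assumes "space M = UNIV" "U \<circ> T = id" "T \<circ> U = id"
    and "preserves_measure M T" "preserves_measure M U"
  shows "invertible_mpt M T"
proof -
  have "bij T" using assms(2,3) by (rule o_bij)
  with assms show ?thesis
    by (simp add: invertible_mpt_def preserves_measure_def the_inv_into_UNIV_eq)
qed

lemma ziter_UNIV:
  assumes "space M = UNIV" "U \<circ> T = id" "T \<circ> U = id"
  shows "ziter M T k = (if 0 \<le> k then T ^^ nat k else U ^^ nat (- k))"
  using assms by (simp add: ziter_def the_inv_into_UNIV_eq)

lemma funpow_conj:
  assumes "R \<circ> R = id"
  shows "(R \<circ> f \<circ> R) ^^ n = R \<circ> f ^^ n \<circ> R"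
proof -
  have "R (R x) = x" for x
    using assms by (rule pointfree_idE)
  then show ?thesis
    by (induction n) (simp_all add: fun_eq_iff)
qed

(* Hence integer iterates commute with conjugation by an involution; this is how the iterates
  of the second transformation \<open>S = R \<circ> T \<circ> R\<close> are reduced to those of \<open>T\<close>. *)
lemma ziter_conj:
  assumes "space M = UNIV" "U \<circ> T = id" "T \<circ> U = id" "R \<circ> R = id"
  shows "ziter M (R \<circ> T \<circ> R) k = R \<circ> ziter M T k \<circ> R"
proof -
  have "(R \<circ> U \<circ> R) \<circ> (R \<circ> T \<circ> R) = id" "(R \<circ> T \<circ> R) \<circ> (R \<circ> U \<circ> R) = id"
    using assms(2-4) by (simp_all add: fun_eq_iff pointfree_idE)
  then show ?thesis
    using assms by (simp add: ziter_UNIV funpow_conj)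
qed

lemma prod_emb_vimage_coordinatewise:
  fixes M :: "'i \<Rightarrow> 'a measure"
  assumes J: "J \<subseteq> I" and A: "\<And>i. i \<in> J \<Longrightarrow> A i \<in> sets (M i)"
    and \<psi>_space: "\<And>i v. i \<in> I \<Longrightarrow> v \<in> space (M i) \<Longrightarrow> \<psi> i v \<in> space (M i)"
  shows "prod_emb I M J (Pi\<^sub>E J (\<lambda>j. \<psi> j -` A j \<inter> space (M j))) =
     (\<lambda>x. \<lambda>i\<in>I. \<psi> i (x i)) -` prod_emb I M J (Pi\<^sub>E J A) \<inter> space (PiM I M)"
proof -
  have "A j \<subseteq> space (M j)" if "j \<in> J" for j using A[OF that] by (rule sets.sets_into_space)
  moreover have "v \<in> (if i \<in> J then \<psi> i -` A i \<inter> space (M i) else space (M i)) \<longleftrightarrow>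
      v \<in> space (M i) \<and> \<psi> i v \<in> (if i \<in> J then A i else space (M i))" if "i \<in> I" for i v
    using \<psi>_space[OF that] by auto
  ultimately show ?thesis
    using J by (subst (1 2) prod_emb_PiE) (auto simp: space_PiM PiE_iff)
qed

lemma distr_PiM_coordinatewise:
  assumes M: "\<And>i. i \<in> I \<Longrightarrow> prob_space (M i)"
    and \<psi>: "\<And>i. i \<in> I \<Longrightarrow> \<psi> i \<in> measurable (M i) (M i)"
    and pres: "\<And>i. i \<in> I \<Longrightarrow> distr (M i) (M i) (\<psi> i) = M i"
  shows "distr (PiM I M) (PiM I M) (\<lambda>x. \<lambda>i\<in>I. \<psi> i (x i)) = PiM I M"
    (is "distr ?P ?P ?F = ?P")
proof (rule measure_eqI_PiM_infinite[symmetric, OF refl])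
  show "finite_measure ?P"
    using prob_space_PiM[of I M] M by (simp add: prob_space_def)
  fix J A assume J: "finite J" "J \<subseteq> I" and A: "\<And>i. i \<in> J \<Longrightarrow> A i \<in> sets (M i)"
  let ?B = "\<lambda>j. \<psi> j -` A j \<inter> space (M j)"
  have B: "?B j \<in> sets (M j)" if "j \<in> J" for j
    using that J A \<psi> by (auto intro: measurable_sets)
  have "?P (prod_emb I M J (Pi\<^sub>E J A)) = (\<Prod>j\<in>J. M j (A j))"
    using M J A by (intro emeasure_PiM_emb) auto
  also have "\<dots> = (\<Prod>j\<in>J. M j (?B j))"
  proof (rule prod.cong[OF refl])
    fix j assume "j \<in> J"
    then have "M j (A j) = distr (M j) (M j) (\<psi> j) (A j)"
      using J pres by auto
    also have "\<dots> = M j (?B j)"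
      using \<open>j \<in> J\<close> J A \<psi> by (intro emeasure_distr) auto
    finally show "M j (A j) = M j (?B j)" .
  qed
  also have "\<dots> = ?P (prod_emb I M J (Pi\<^sub>E J ?B))"
    using M J B by (intro emeasure_PiM_emb[symmetric]) auto
  also have "prod_emb I M J (Pi\<^sub>E J ?B) = ?F -` prod_emb I M J (Pi\<^sub>E J A) \<inter> space ?P"
    using J A measurable_space[OF \<psi>] by (intro prod_emb_vimage_coordinatewise) auto
  also have "?P \<dots> = distr ?P ?P ?F (prod_emb I M J (Pi\<^sub>E J A))"
    using J A \<psi> by (intro emeasure_distr[symmetric] sets_PiM_I) auto
  finally show "?P (prod_emb I M J (Pi\<^sub>E J A)) = distr ?P ?P ?F (prod_emb I M J (Pi\<^sub>E J A))" .
qed simp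

definition coord_map :: "('i \<Rightarrow> 'i) \<Rightarrow> ('i \<Rightarrow> 'a \<Rightarrow> 'a) \<Rightarrow> ('i \<Rightarrow> 'a) \<Rightarrow> 'i \<Rightarrow> 'a" where
  "coord_map \<rho> \<psi> x = (\<lambda>i. \<psi> i (x (\<rho> i)))"

lemma measurable_coord_map:
  assumes "\<And>i. \<psi> i \<in> measurable N N"
  shows "coord_map \<rho> \<psi> \<in> measurable (PiM UNIV (\<lambda>_. N)) (PiM UNIV (\<lambda>_. N))"
  unfolding coord_map_def[abs_def]
proof (rule measurable_PiM_single')
  fix i
  have "(\<lambda>x. x (\<rho> i)) \<in> measurable (PiM UNIV (\<lambda>_. N)) N"
    by (rule measurable_component_singleton) simp
  then show "(\<lambda>x. \<psi> i (x (\<rho> i))) \<in> measurable (PiM UNIV (\<lambda>_. N)) N"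
    using assms by (rule measurable_compose)
  show "(\<lambda>x i. \<psi> i (x (\<rho> i))) \<in> space (PiM UNIV (\<lambda>_. N)) \<rightarrow> (UNIV \<rightarrow>\<^sub>E space N)"
    using measurable_space[OF assms] by (auto simp: space_PiM)
qed

(* A coordinate map built from a bijection of the index set and measure preserving components
  preserves the product measure: it is a reindexing (library lemma \<open>distr_PiM_reindex\<close>)
  followed by a coordinatewise map. *)
lemma coord_map_preserves_measure:
  assumes N: "prob_space N" and \<rho>: "bij \<rho>" and \<psi>: "\<And>i. preserves_measure N (\<psi> i)"
  shows "preserves_measure (PiM UNIV (\<lambda>_. N)) (coord_map \<rho> \<psi>)"
proof -
  let ?P = "PiM (UNIV :: 'i set) (\<lambda>_. N)"
  have \<psi>_meas: "\<And>i. \<psi> i \<in> measurable N N"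
    using \<psi> by (simp add: preserves_measure_def)
  have "distr ?P ?P (\<lambda>x. \<lambda>i\<in>UNIV. x (\<rho> i)) = ?P"
    using N \<rho> distr_PiM_reindex[of UNIV "\<lambda>_. N" \<rho> UNIV] by (simp add: bij_is_inj)
  then have permute: "preserves_measure ?P (coord_map \<rho> (\<lambda>_ v. v))"
    using measurable_coord_map[of "\<lambda>_ v. v" N \<rho>]
    by (simp add: preserves_measure_def coord_map_def[abs_def] restrict_UNIV)
  have "distr ?P ?P (\<lambda>x. \<lambda>i\<in>UNIV. \<psi> i (x i)) = ?P"
    using N \<psi> by (intro distr_PiM_coordinatewise) (auto simp: preserves_measure_def)
  then have "distr ?P ?P (coord_map id \<psi>) = ?P"
    by (simp add: coord_map_def[abs_def] restrict_UNIV)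
  then have coordinatewise: "preserves_measure ?P (coord_map id \<psi>)"
    using measurable_coord_map[OF \<psi>_meas] by (simp add: preserves_measure_def)
  have "coord_map \<rho> \<psi> = coord_map id \<psi> \<circ> coord_map \<rho> (\<lambda>_ v. v)"
    by (simp add: coord_map_def fun_eq_iff)
  then show ?thesis
    using preserves_measure_comp[OF coordinatewise permute] by simp
qed

lemma coord_map_involution:
  assumes "\<And>i. \<rho> (\<rho> i) = i" "\<And>i. \<psi> (\<rho> i) = \<psi> i" "\<And>i v. \<psi> i (\<psi> i v) = v"
  shows "coord_map \<rho> \<psi> \<circ> coord_map \<rho> \<psi> = id"
  using assms by (simp add: coord_map_def fun_eq_iff)

definition unit_interval :: "real measure" where
  "unit_interval = uniform_measure lborel {0..1}"

lemma prob_space_unit_interval: "prob_space unit_interval"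
  unfolding unit_interval_def by (rule prob_space_uniform_measure) auto

lemma sets_unit_interval [simp, measurable_cong]: "sets unit_interval = sets borel"
  by (simp add: unit_interval_def)

lemma space_unit_interval [simp]: "space unit_interval = UNIV"
  by (simp add: unit_interval_def)

lemma emeasure_unit_interval:
  "E \<in> sets borel \<Longrightarrow> emeasure unit_interval E = emeasure lborel ({0..1} \<inter> E)"
  unfolding unit_interval_def
  by (subst emeasure_uniform_measure) (auto simp: divide_ennreal_def)

lemma emeasure_lborel_reflect:
  assumes "X \<in> sets borel"
  shows "emeasure lborel {x::real. t - x \<in> X} = emeasure lborel X"
proof -
  have "distr lborel borel (\<lambda>x::real. t - x) = distr (distr lborel borel uminus) borel ((+) t)"
    by (subst distr_distr) (auto simp: comp_def)
  also have "\<dots> = lborel"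
    by (simp add: lborel_distr_uminus lborel_distr_plus)
  finally have "emeasure lborel X = emeasure (distr lborel borel (\<lambda>x. t - x)) X"
    by simp
  also have "\<dots> = emeasure lborel ((\<lambda>x. t - x) -` X \<inter> space lborel)"
    using assms by (intro emeasure_distr) auto
  finally show ?thesis
    by (simp add: vimage_def)
qed

(* Applied in one
  coordinate it tunes the overlap of \<open>[0, 1/2)\<close> with its image to any value in \<open>[0, 1/4]\<close>. *)
definition reflect_upto :: "real \<Rightarrow> real \<Rightarrow> real" where
  "reflect_upto t x = (if 0 \<le> x \<and> x \<le> t then t - x else x)"

lemma reflect_upto_involution: "reflect_upto t (reflect_upto t x) = x"
  by (auto simp: reflect_upto_def)

lemma measurable_reflect_upto [measurable]: "reflect_upto t \<in> borel_measurable borel"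
  unfolding reflect_upto_def by measurable

lemma reflect_upto_preserves_measure:
  assumes "0 \<le> t" "t \<le> 1"
  shows "preserves_measure unit_interval (reflect_upto t)"
  unfolding preserves_measure_def
proof (intro conjI measure_eqI)
  fix E assume "E \<in> sets (distr unit_interval unit_interval (reflect_upto t))"
  then have E: "E \<in> sets borel" by simp
  have split_pre: "{0..1} \<inter> reflect_upto t -` E = {x. t - x \<in> E \<inter> {0..t}} \<union> ({t<..1} \<inter> E)"
    using assms by (auto simp: reflect_upto_def split: if_splits)
  have split_E: "{0..1} \<inter> E = (E \<inter> {0..t}) \<union> ({t<..1} \<inter> E)"
    using assms by auto
  have "emeasure lborel ({0..1} \<inter> reflect_upto t -` E)
      = emeasure lborel {x. t - x \<in> E \<inter> {0..t}} + emeasure lborel ({t<..1} \<inter> E)"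
    unfolding split_pre using E by (intro plus_emeasure[symmetric]) auto
  also have "\<dots> = emeasure lborel (E \<inter> {0..t}) + emeasure lborel ({t<..1} \<inter> E)"
    using E by (subst emeasure_lborel_reflect) auto
  also have "\<dots> = emeasure lborel ({0..1} \<inter> E)"
    unfolding split_E using E by (intro plus_emeasure) auto
  finally have "emeasure lborel ({0..1} \<inter> reflect_upto t -` E) = emeasure lborel ({0..1} \<inter> E)" .
  moreover have "reflect_upto t -` E \<in> sets borel"
    using measurable_sets[OF measurable_reflect_upto E] by simp
  ultimately show "emeasure (distr unit_interval unit_interval (reflect_upto t)) E = emeasure unit_interval E"
    using E by (simp add: emeasure_distr emeasure_unit_interval)
qed simp_all

(* For \<open>t \<in> [1/2, 1]\<close>, \<open>[0, 1/2)\<close> meets the preimage of \<open>[0, 1/2)\<close> in \<open>(t - 1/2, 1/2)\<close>,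
  a set of measure \<open>1 - t\<close>. *)
lemma measure_reflect_upto_overlap:
  assumes "1/2 \<le> t" "t \<le> 1"
  shows "measure unit_interval ({0..<1/2} \<inter> reflect_upto t -` {0..<1/2}) = 1 - t"
proof -
  have "{0..1} \<inter> ({0..<1/2} \<inter> reflect_upto t -` {0..<1/2}) = {t - 1/2<..<1/2::real}"
    using assms by (auto simp: reflect_upto_def split: if_splits)
  moreover have "{0..<1/2} \<inter> reflect_upto t -` {0..<1/2} \<in> sets borel"
    by measurable
  ultimately have "emeasure unit_interval ({0..<1/2} \<inter> reflect_upto t -` {0..<1/2}) = ennreal (1 - t)"
    using assms by (simp add: emeasure_unit_interval)
  then show ?thesis
    using assms by (simp add: measure_def)
qed

definition cube :: "(nat \<Rightarrow> real) measure" where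
  "cube = PiM UNIV (\<lambda>_. unit_interval)"

lemma space_cube [simp]: "space cube = UNIV"
  by (simp add: cube_def space_PiM)

lemma prob_space_cube: "prob_space cube"
  unfolding cube_def by (intro prob_space_PiM prob_space_unit_interval)

lemma measure_cube_coordinate:
  assumes "C \<in> sets borel"
  shows "measure cube {x. x i \<in> C} = measure unit_interval C"
proof -
  have coord: "(\<lambda>x. x i) \<in> measurable cube unit_interval"
    unfolding cube_def by (rule measurable_component_singleton) simp
  have "measure cube {x. x i \<in> C} = measure (distr cube unit_interval (\<lambda>x. x i)) C"
    using measure_distr[OF coord, of C] assms by (simp add: vimage_def)
  also have "distr cube unit_interval (\<lambda>x. x i) = unit_interval"
    unfolding cube_def by (rule distr_PiM_component) (auto intro: prob_space_unit_interval)
  finally show ?thesis .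
qed

(* The coordinates are indexed by \<open>bool \<times> int\<close> (two copies of \<open>\<int>\<close>) via a fixed bijection with \<open>nat\<close>. *)
definition enc :: "bool \<times> int \<Rightarrow> nat" where
  "enc = to_nat_on UNIV"

definition dec :: "nat \<Rightarrow> bool \<times> int" where
  "dec = inv enc"

lemma bij_enc: "bij enc"
  unfolding enc_def by (rule to_nat_on_infinite) (auto simp: infinite_UNIV_int finite_prod)

lemma dec_enc [simp]: "dec (enc p) = p"
  using bij_enc by (simp add: dec_def bij_is_inj)

lemma enc_dec [simp]: "enc (dec i) = i"
  using bij_enc by (simp add: dec_def bij_is_surj surj_f_inv_f)

definition translate :: "int \<Rightarrow> (nat \<Rightarrow> real) \<Rightarrow> nat \<Rightarrow> real" where
  "translate k = coord_map (\<lambda>i. enc (apsnd (\<lambda>j. j + k) (dec i))) (\<lambda>_ v. v)"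

lemma translate_enc [simp]: "translate k x (enc (s, j)) = x (enc (s, j + k))"
  by (simp add: translate_def coord_map_def)

lemma translate_translate: "translate k \<circ> translate l = translate (k + l)"
  by (simp add: translate_def coord_map_def fun_eq_iff apsnd_def map_prod_def split_beta ac_simps)

lemma translate_0: "translate 0 = id"
  by (simp add: translate_def coord_map_def fun_eq_iff apsnd_def map_prod_def split_beta)

lemma funpow_translate: "translate k ^^ n = translate (int n * k)"
  by (induction n) (simp_all add: translate_0 translate_translate algebra_simps)

lemma translate_preserves_measure: "preserves_measure cube (translate k)"
proof -
  have "bij (\<lambda>i. enc (apsnd (\<lambda>j. j + k) (dec i)))"
    by (rule o_bij[where g = "\<lambda>i. enc (apsnd (\<lambda>j. j - k) (dec i))"])
      (simp_all add: fun_eq_iff apsnd_def map_prod_def split_beta)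
  then show ?thesis
    unfolding translate_def cube_def
    by (intro coord_map_preserves_measure prob_space_unit_interval)
      (simp_all add: preserves_measure_def distr_id2)
qed

lemma ziter_translate: "ziter cube (translate 1) k = translate k"
  using ziter_UNIV[OF space_cube, of "translate (-1)" "translate 1"]
  by (simp add: translate_translate translate_0 funpow_translate)

lemma invertible_translate: "invertible_mpt cube (translate 1)"
  by (rule invertible_mpt_UNIV[OF space_cube, of "translate (-1)"])
    (simp_all add: translate_translate translate_0 translate_preserves_measure)

locale correlation_data =
  fixes a b :: "nat \<Rightarrow> int" and c :: "nat \<Rightarrow> real"
  assumes inj_a: "inj a" and inj_b: "inj b"
    and a_nonzero: "\<And>n. a n \<noteq> 0" and b_nonzero: "\<And>n. b n \<noteq> 0"
    and c_range: "\<And>n. 0 \<le> c n \<and> c n \<le> 1 / 4"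
begin

(* The index involution exchanging \<open>(False, 0)\<close> with \<open>(True, 0)\<close> and \<open>(False, a n)\<close> with
  \<open>(True, b n)\<close>, fixing all other indices; \<open>a n \<noteq> 0 \<noteq> b n\<close> and injectivity make it well defined. *)
definition swap_index :: "bool \<times> int \<Rightarrow> bool \<times> int" where
  "swap_index p = (case p of
      (False, j) \<Rightarrow> if j = 0 then (True, 0) else if j \<in> range a then (True, b (inv a j)) else p
    | (True, j) \<Rightarrow> if j = 0 then (False, 0) else if j \<in> range b then (False, a (inv b j)) else p)"

definition label :: "bool \<times> int \<Rightarrow> nat option" where
  "label p = (case p of
      (False, j) \<Rightarrow> if j \<in> range a then Some (inv a j) else None
    | (True, j) \<Rightarrow> if j \<in> range b then Some (inv b j) else None)"

lemma swap_index_involution: "swap_index (swap_index p) = p"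
  using a_nonzero b_nonzero inj_a inj_b
  by (auto simp: swap_index_def split: bool.splits prod.splits dest: injD)

lemma label_swap_index: "label (swap_index p) = label p"
  using a_nonzero b_nonzero inj_a inj_b
  by (auto simp: swap_index_def label_def split: bool.splits prod.splits)

lemma swap_index_origin [simp]: "swap_index (False, 0) = (True, 0)"
  by (simp add: swap_index_def)

lemma swap_index_b [simp]: "swap_index (True, b n) = (False, a n)"
  using b_nonzero inj_b by (simp add: swap_index_def)

lemma label_origin [simp]: "label (False, 0) = None"
  using a_nonzero by (auto simp: label_def)

lemma label_b [simp]: "label (True, b n) = Some n"
  using inj_b by (simp add: label_def)

definition local_map :: "bool \<times> int \<Rightarrow> real \<Rightarrow> real" where
  "local_map p = (case label p of Some n \<Rightarrow> reflect_upto (1 - c n) | None \<Rightarrow> id)"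

lemma local_map_involution: "local_map p (local_map p v) = v"
  by (simp add: local_map_def reflect_upto_involution split: option.split)

lemma local_map_swap_index: "local_map (swap_index p) = local_map p"
  by (simp add: local_map_def label_swap_index)

lemma local_map_preserves_measure: "preserves_measure unit_interval (local_map p)"
proof (cases "label p")
  case None
  then show ?thesis
    by (simp add: local_map_def preserves_measure_def id_def distr_id2)
next
  case (Some n)
  then show ?thesis
    using c_range[of n] by (simp add: local_map_def reflect_upto_preserves_measure)
qed

definition twist :: "(nat \<Rightarrow> real) \<Rightarrow> nat \<Rightarrow> real" where
  "twist = coord_map (\<lambda>i. enc (swap_index (dec i))) (\<lambda>i. local_map (dec i))"

lemma twist_enc [simp]: "twist x (enc p) = local_map p (x (enc (swap_index p)))"
  by (simp add: twist_def coord_map_def)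

lemma twist_involution: "twist \<circ> twist = id"
  unfolding twist_def
  by (rule coord_map_involution)
    (simp_all add: swap_index_involution local_map_swap_index local_map_involution)

lemma twist_preserves_measure: "preserves_measure cube twist"
proof -
  have "bij (\<lambda>i. enc (swap_index (dec i)))"
    by (rule o_bij[where g = "\<lambda>i. enc (swap_index (dec i))"])
      (simp_all add: fun_eq_iff swap_index_involution)
  then show ?thesis
    unfolding twist_def cube_def
    by (intro coord_map_preserves_measure prob_space_unit_interval local_map_preserves_measure)
qed

definition twisted_shift :: "(nat \<Rightarrow> real) \<Rightarrow> nat \<Rightarrow> real" where
  "twisted_shift = twist \<circ> translate 1 \<circ> twist"

lemma invertible_twisted_shift: "invertible_mpt cube twisted_shift"
proof (rule invertible_mpt_UNIV[OF space_cube])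
  let ?U = "twist \<circ> translate (-1) \<circ> twist"
  show "?U \<circ> twisted_shift = id" "twisted_shift \<circ> ?U = id"
    using twist_involution
    by (simp_all add: twisted_shift_def fun_eq_iff pointfree_idE translate_translate translate_0)
  show "preserves_measure cube twisted_shift" "preserves_measure cube ?U"
    unfolding twisted_shift_def
    by (intro preserves_measure_comp twist_preserves_measure translate_preserves_measure)+
qed

lemma ziter_twisted_shift: "ziter cube twisted_shift k = twist \<circ> translate k \<circ> twist"
  unfolding twisted_shift_def
  using ziter_conj[OF space_cube _ _ twist_involution, of "translate (-1)" "translate 1"]
  by (simp add: translate_translate translate_0 ziter_translate)

definition base_set :: "(nat \<Rightarrow> real) set" where
  "base_set = {x. x (enc (False, 0)) \<in> {0..<1/2}}"

lemma base_set_sets: "base_set \<in> sets cube"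
proof -
  have "(\<lambda>x. x (enc (False, 0))) \<in> measurable cube unit_interval"
    unfolding cube_def by (rule measurable_component_singleton) simp
  from measurable_sets[OF this, of "{0..<1/2}"] show ?thesis
    by (simp add: base_set_def vimage_def)
qed

(* The key computation: \<open>T^(a n) x \<in> A\<close> reads the coordinate \<open>(False, a n)\<close> of \<open>x\<close>, while
  \<open>S^(b n) x \<in> A\<close> reads the coordinate \<open>(True, b n)\<close> of \<open>R x\<close>, i.e. the reflected coordinate
  \<open>(False, a n)\<close> of \<open>x\<close>.  So both events depend on this single coordinate. *)
lemma return_set:
  "zpreimage cube (translate 1) (a n) base_set \<inter> zpreimage cube twisted_shift (b n) base_set
    = {x. x (enc (False, a n)) \<in> {0..<1/2} \<inter> reflect_upto (1 - c n) -` {0..<1/2}}"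
  by (auto simp: zpreimage_def ziter_translate ziter_twisted_shift base_set_def local_map_def)

lemma measure_return_set:
  "measure cube (zpreimage cube (translate 1) (a n) base_set \<inter>
     zpreimage cube twisted_shift (b n) base_set) = c n"
proof -
  let ?C = "{0..<1/2} \<inter> reflect_upto (1 - c n) -` {0..<1/2}"
  have "?C \<in> sets borel"
    by measurable
  then have "measure cube {x. x (enc (False, a n)) \<in> ?C} = measure unit_interval ?C"
    by (rule measure_cube_coordinate)
  also have "\<dots> = c n"
    using c_range[of n] by (subst measure_reflect_upto_overlap) auto
  finally show ?thesis
    by (simp only: return_set)
qed

end

theorem corollary4p2:
  fixes a b :: "nat \<Rightarrow> int" and c :: "nat \<Rightarrow> real"
  assumes "inj a" and "inj b"
    and "\<And>n. a n \<noteq> 0" and "\<And>n. b n \<noteq> 0"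
    and "\<And>n. 0 \<le> c n \<and> c n \<le> 1 / 4"
  shows "\<exists>(M :: (nat \<Rightarrow> real) measure) T S A.
           prob_space M \<and> invertible_mpt M T \<and> invertible_mpt M S \<and> A \<in> sets M \<and>
           (\<forall>n. c n = measure M (zpreimage M T (a n) A \<inter> zpreimage M S (b n) A))"
proof -
  interpret correlation_data a b c
    using assms by unfold_locales auto
  show ?thesis
    using prob_space_cube invertible_translate invertible_twisted_shift base_set_sets
      measure_return_set[symmetric] by blast
qed

end
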